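(* Let $V\subseteq\mathcal V$ be finite and let $\Theta,\Psi\subseteq\mathcal P(\mathcal H_V)$ be convex and closed. (1) If $\Theta\neq\emptyset$, then $\Theta\preceq_{dem}\Psi$ iff $\Theta\le_S\Psi$. (2) If $\Psi\neq\emptyset$, then $\Theta\preceq_{ang}\Psi$ iff $\Theta\le_H\Psi$.
   Context: $\mathcal H_V$ is a finite-dimensional Hilbert space (tensor product of qubit spaces). $\mathcal D(\mathcal H_V)$: partial density operators (positive, trace $\le1$); $\mathcal P(\mathcal H_V)$: effects (positive operators with eigenvalues in $[0,1]$); $\sqsubseteq$: Löwner order. For $\Theta\subseteq\mathcal P(\mathcal H_V)$ and $\rho\in\mathcal D(\mathcal H_V)$: $\mathrm{Exp}_{dem}(\rho\models\Theta)=\inf_{M\in\Theta}{\rm tr}(M\rho)$ (equal to ${\rm tr}(\rho)$ if $\Theta=\emptyset$) and $\mathrm{Exp}_{ang}(\rho\models\Theta)=\sup_{M\in\Theta}{\rm tr}(M\rho)$ (equal to $0$ if $\Theta=\emptyset$). $\Theta\preceq_{dem}\Psi$ iff $\mathrm{Exp}_{dem}(\rho\models\Theta)\le\mathrm{Exp}_{dem}(\rho\models\Psi)$ for all $\rho\in\mathcal D(\mathcal H_V)$; $\Theta\preceq_{ang}\Psi$ iff $\mathrm{Exp}_{ang}(\rho\models\Theta)\le\mathrm{Exp}_{ang}(\rho\models\Psi)$ for all $\rho\in\mathcal D(\mathcal H_V)$. $\Theta\le_H\Psi$ iff $\forall M\in\Theta\,\exists N\in\Psi: M\sqsubseteq N$;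 $\Theta\le_S\Psi$ iff $\forall N\in\Psi\,\exists M\in\Theta:M\sqsubseteq N$. *)

theory Defs
  imports "HOL-Analysis.Analysis"
begin

text \<open>Operators on the Hilbert space H_V are complex n x n matrices, indexed by a finite type 'n.\<close>

definition cadj :: "complex^'n^'n \<Rightarrow> complex^'n^'n" where
  "cadj A = (\<chi> i j. cnj (A $ j $ i))"

definition qform :: "complex^'n^'n \<Rightarrow> complex^'n \<Rightarrow> complex" where
  "qform A x = (\<Sum>i\<in>UNIV. cnj (x $ i) * (A *v x) $ i)"

definition positive_op :: "complex^'n^'n \<Rightarrow> bool" where
  "positive_op A \<longleftrightarrow> cadj A = A \<and> (\<forall>x. 0 \<le> Re (qform A x))"

definition loewner_le :: "complex^'n^'n \<Rightarrow> complex^'n^'n \<Rightarrow> bool" (infix "\<sqsubseteq>\<^sub>L" 50) where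
  "A \<sqsubseteq>\<^sub>L B \<longleftrightarrow> positive_op (B - A)"

definition pdo :: "(complex^'n^'n) set" where
  "pdo = {\<rho>. positive_op \<rho> \<and> Re (trace \<rho>) \<le> 1}"

definition effects :: "(complex^'n^'n) set" where
  "effects = {M. positive_op M \<and> M \<sqsubseteq>\<^sub>L mat 1}"

definition exp_dem :: "complex^'n^'n \<Rightarrow> (complex^'n^'n) set \<Rightarrow> real" where
  "exp_dem \<rho> \<Theta> = (if \<Theta> = {} then Re (trace \<rho>) else Inf ((\<lambda>M. Re (trace (M ** \<rho>))) ` \<Theta>))"

definition exp_ang :: "complex^'n^'n \<Rightarrow> (complex^'n^'n) set \<Rightarrow> real" where
  "exp_ang \<rho> \<Theta> = (if \<Theta> = {} then 0 else Sup ((\<lambda>M. Re (trace (M ** \<rho>))) ` \<Theta>))"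

definition preceq_dem :: "(complex^'n^'n) set \<Rightarrow> (complex^'n^'n) set \<Rightarrow> bool" where
  "preceq_dem \<Theta> \<Psi> \<longleftrightarrow> (\<forall>\<rho>\<in>pdo. exp_dem \<rho> \<Theta> \<le> exp_dem \<rho> \<Psi>)"

definition preceq_ang :: "(complex^'n^'n) set \<Rightarrow> (complex^'n^'n) set \<Rightarrow> bool" where
  "preceq_ang \<Theta> \<Psi> \<longleftrightarrow> (\<forall>\<rho>\<in>pdo. exp_ang \<rho> \<Theta> \<le> exp_ang \<rho> \<Psi>)"

definition le_H :: "(complex^'n^'n) set \<Rightarrow> (complex^'n^'n) set \<Rightarrow> bool" where
  "le_H \<Theta> \<Psi> \<longleftrightarrow> (\<forall>M\<in>\<Theta>. \<exists>N\<in>\<Psi>. M \<sqsubseteq>\<^sub>L N)"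

definition le_S :: "(complex^'n^'n) set \<Rightarrow> (complex^'n^'n) set \<Rightarrow> bool" where
  "le_S \<Theta> \<Psi> \<longleftrightarrow> (\<forall>N\<in>\<Psi>. \<exists>M\<in>\<Theta>. M \<sqsubseteq>\<^sub>L N)"

end

theory Submission
  imports Defs
begin

text \<open>Expectations are real-linear functionals: for a density operator \<open>\<rho>\<close>, \<open>Re tr(M\<rho>)\<close> is the real
  Frobenius inner product \<open>inner \<rho> M\<close>. The orders \<open>\<le>\<^sub>S\<close> and \<open>\<le>\<^sub>H\<close> imply the expectation orders because
  \<open>inner \<rho>\<close> is monotone in the Loewner order; this rests on \<open>inner P Q \<ge> 0\<close> for positive \<open>P\<close>, \<open>Q\<close>,
  which follows by writing \<open>Q\<close> as a sum of rank-one operators \<open>x x\<^sup>*\<close> (Cholesky-style elimination).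
  Conversely, if no \<open>M \<in> \<Theta>\<close> lies below \<open>N\<close>, then \<open>N\<close> is outside the closed convex set
  \<open>\<Theta> + {P. P \<ge> 0}\<close> (closed because \<open>\<Theta>\<close> is compact), and a separating hyperplane exists. Since the set
  is closed upwards, the Hermitian part of the normal is positive; normalised, it is a partial density
  operator whose expectation of \<open>\<Theta>\<close> exceeds that of \<open>N\<close>. The angelic case reduces to the demonic one
  by negation.\<close>

lemma cadj_nth [simp]: "cadj A $ i $ j = cnj (A $ j $ i)"
  by (simp add: cadj_def)

lemma cadj_cadj [simp]: "cadj (cadj A) = A"
  by (simp add: vec_eq_iff)

lemma cadj_add: "cadj (A + B) = cadj A + cadj B"
  by (simp add: vec_eq_iff)

lemma cadj_diff: "cadj (A - B) = cadj A - cadj B"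
  by (simp add: vec_eq_iff)

lemma cadj_minus: "cadj (- A) = - cadj A"
  by (simp add: vec_eq_iff)

lemma cadj_scaleR: "cadj (c *\<^sub>R A) = c *\<^sub>R cadj A"
  by (simp add: vec_eq_iff)

lemma cadj_hermitian_entry: "cadj Q = Q \<Longrightarrow> Q $ a $ b = cnj (Q $ b $ a)"
  by (metis cadj_nth)

lemma inner_cadj_cadj: "inner (cadj A) (cadj B) = inner A B"
proof -
  have "inner (cadj A) (cadj B) = (\<Sum>i\<in>UNIV. \<Sum>j\<in>UNIV. inner (A $ j $ i) (B $ j $ i))"
    by (simp add: inner_vec_def inner_complex_def)
  also have "\<dots> = inner A B"
    by (subst sum.swap) (simp add: inner_vec_def)
  finally show ?thesis .
qed

lemma Re_trace_mult_eq_inner: "Re (trace (X ** R)) = inner (cadj R) X"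
proof -
  have "Re (trace (X ** R)) = (\<Sum>i\<in>UNIV. \<Sum>k\<in>UNIV. Re (X $ i $ k * R $ k $ i))"
    by (simp add: trace_def matrix_matrix_mult_def Re_sum)
  also have "\<dots> = inner (cadj R) X"
    by (simp add: inner_vec_def inner_complex_def mult.commute)
  finally show ?thesis .
qed

definition outer :: "complex^'n \<Rightarrow> complex^'n^'n" where
  "outer x = (\<chi> i j. x $ i * cnj (x $ j))"

lemma cadj_outer [simp]: "cadj (outer x) = outer x"
  by (simp add: vec_eq_iff outer_def)

lemma Re_qform_eq_inner_outer: "Re (qform A x) = inner (outer x) A"
proof -
  have "Re (qform A x) = (\<Sum>i\<in>UNIV. \<Sum>j\<in>UNIV. Re (cnj (x $ i) * (A $ i $ j * x $ j)))"
    by (simp add: qform_def matrix_vector_mult_def Re_sum sum_distrib_left)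
  also have "\<dots> = inner (outer x) A"
    by (simp add: inner_vec_def outer_def inner_complex_def algebra_simps)
  finally show ?thesis .
qed

lemma Re_cnj_mult_self: "Re (cnj z * z) = (cmod z)\<^sup>2"
  by (metis Re_complex_of_real complex_norm_square mult.commute)

lemma qform_outer:
  "qform (outer v) y = cnj (\<Sum>j\<in>UNIV. cnj (v $ j) * y $ j) * (\<Sum>j\<in>UNIV. cnj (v $ j) * y $ j)"
proof -
  have "qform (outer v) y = (\<Sum>i\<in>UNIV. cnj (y $ i) * v $ i * (\<Sum>j\<in>UNIV. cnj (v $ j) * y $ j))"
    by (simp add: qform_def matrix_vector_mult_def outer_def sum_distrib_left algebra_simps)
  also have "\<dots> = (\<Sum>i\<in>UNIV. cnj (y $ i) * v $ i) * (\<Sum>j\<in>UNIV. cnj (v $ j) * y $ j)"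
    by (simp add: sum_distrib_right)
  also have "(\<Sum>i\<in>UNIV. cnj (y $ i) * v $ i) = cnj (\<Sum>j\<in>UNIV. cnj (v $ j) * y $ j)"
    by (simp add: mult.commute)
  finally show ?thesis .
qed

lemma qform_add: "qform (A + B) x = qform A x + qform B x"
  by (simp add: qform_def matrix_vector_mult_def sum.distrib algebra_simps)

lemma qform_diff: "qform (A - B) x = qform A x - qform B x"
  by (simp add: qform_def matrix_vector_mult_def sum_subtractf algebra_simps)

lemma scaleR_matrix_nth: "(c *\<^sub>R A) $ i $ j = complex_of_real c * A $ i $ j"
  by (simp only: vector_scaleR_component) (simp add: scaleR_conv_of_real)

lemma qform_scaleR: "qform (c *\<^sub>R A) x = c *\<^sub>R qform A x"
  by (simp add: qform_def matrix_vector_mult_def scaleR_matrix_nth scaleR_conv_of_real[where 'a=complex]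
      sum_distrib_left algebra_simps del: scaleR_conv_of_real)

lemma positive_op_hermitian: "positive_op A \<Longrightarrow> cadj A = A"
  by (simp add: positive_op_def)

lemma positive_op_outer: "positive_op (outer v)"
  unfolding positive_op_def by (simp only: qform_outer Re_cnj_mult_self cadj_outer) simp

lemma positive_op_add: "positive_op A \<Longrightarrow> positive_op B \<Longrightarrow> positive_op (A + B)"
  unfolding positive_op_def by (simp add: cadj_add qform_add)

lemma positive_op_scaleR: "positive_op A \<Longrightarrow> 0 \<le> c \<Longrightarrow> positive_op (c *\<^sub>R A)"
  unfolding positive_op_def by (simp add: cadj_scaleR qform_scaleR)

lemma positive_op_mat_1: "positive_op (mat 1)"
proof -
  have "cadj (mat 1) = mat 1"
    by (simp add: vec_eq_iff mat_def)
  then show ?thesis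
    unfolding positive_op_def qform_def by (simp add: Re_sum Re_cnj_mult_self sum_nonneg)
qed

lemma qform_add_axis:
  assumes "cadj Q = Q"
  shows "qform Q (x + axis i t)
    = qform Q x + t * cnj ((Q *v x) $ i) + cnj t * (Q *v x) $ i + cnj t * t * Q $ i $ i"
proof -
  have Q_axis: "Q *v axis i t = (\<chi> a. Q $ a $ i * t)"
    by (simp add: vec_eq_iff matrix_vector_mult_def axis_def if_distrib[of "\<lambda>z. _ * z"] cong: if_cong)
  have "qform Q (x + axis i t) = (\<Sum>a\<in>UNIV. cnj (x $ a + (if a = i then t else 0)) *
           ((Q *v x) $ a + Q $ a $ i * t))"
    by (simp add: qform_def matrix_vector_right_distrib Q_axis) (simp add: axis_def)
  also have "\<dots> = (\<Sum>a\<in>UNIV. cnj (x $ a) * (Q *v x) $ a + cnj (x $ a) * Q $ a $ i * t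
      + (if a = i then cnj t * (Q *v x) $ i + cnj t * t * Q $ i $ i else 0))"
    by (rule sum.cong) (auto simp: algebra_simps)
  also have "\<dots> = qform Q x + (\<Sum>a\<in>UNIV. cnj (x $ a) * Q $ a $ i * t)
      + (cnj t * (Q *v x) $ i + cnj t * t * Q $ i $ i)"
    by (simp only: sum.distrib sum.delta' finite_UNIV) (simp add: qform_def)
  also have "(\<Sum>a\<in>UNIV. cnj (x $ a) * Q $ a $ i * t) = t * cnj ((Q *v x) $ i)"
  proof -
    have "cnj (Q $ i $ a * x $ a) = Q $ a $ i * cnj (x $ a)" for a
      using cadj_hermitian_entry[OF assms, of a i] by simp
    then show ?thesis
      by (simp only: matrix_vector_mult_def vec_lambda_beta cnj_sum sum_distrib_left)
        (simp add: mult_ac)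
  qed
  finally show ?thesis by (simp add: add.assoc)
qed

lemma Re_qform_add_axis:
  assumes "cadj Q = Q"
  shows "Re (qform Q (x + axis i t))
    = Re (qform Q x) + 2 * Re (cnj t * (Q *v x) $ i) + (cmod t)\<^sup>2 * Re (Q $ i $ i)"
proof -
  have "cnj t * t = complex_of_real ((cmod t)\<^sup>2)"
    by (metis complex_norm_square mult.commute of_real_power)
  then show ?thesis
    by (simp add: qform_add_axis[OF assms])
qed

lemma positive_op_diag_nonneg:
  assumes "positive_op Q" shows "0 \<le> Re (Q $ i $ i)"
proof -
  have "0 \<le> Re (qform Q (0 + axis i 1))"
    using assms by (simp add: positive_op_def)
  also have "\<dots> = Re (Q $ i $ i)"
    by (subst Re_qform_add_axis[OF positive_op_hermitian[OF assms]]) (simp add: qform_def)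
  finally show ?thesis .
qed

lemma positive_op_diag_zero_row:
  assumes "positive_op Q" and "Re (Q $ i $ i) = 0" shows "Q $ i $ b = 0"
proof (rule ccontr)
  \<comment> \<open>As \<open>Q\<^sub>i\<^sub>i = 0\<close>, the form at \<open>e\<^sub>b + t e\<^sub>i\<close> is affine in \<open>t\<close>, so it becomes negative unless \<open>Q\<^sub>i\<^sub>b = 0\<close>.\<close>
  define w where "w = Q $ i $ b"
  assume "Q $ i $ b \<noteq> 0"
  then have w_pos: "0 < (cmod w)\<^sup>2" by (simp add: w_def)
  define R where "R = Re (qform Q (axis b 1))"
  define s where "s = (\<bar>R\<bar> + 1) / (2 * (cmod w)\<^sup>2)"
  define t where "t = - (complex_of_real s * w)"
  have "(Q *v axis b 1) $ i = w"
    by (simp add: w_def matrix_vector_mult_def axis_def if_distrib[of "\<lambda>z. _ * z"] cong: if_cong)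
  then have "Re (cnj t * (Q *v axis b 1) $ i) = - s * (cmod w)\<^sup>2"
    by (simp add: t_def Re_cnj_mult_self[symmetric] mult.assoc)
  moreover have "0 \<le> Re (qform Q (axis b 1 + axis i t))"
    using assms by (simp add: positive_op_def)
  ultimately have "0 \<le> R - 2 * s * (cmod w)\<^sup>2"
    using Re_qform_add_axis[OF positive_op_hermitian[OF assms(1)], of "axis b 1" i t] assms(2)
    by (simp add: R_def)
  moreover have "2 * s * (cmod w)\<^sup>2 = \<bar>R\<bar> + 1"
    using w_pos by (simp add: s_def)
  ultimately show False by linarith
qed

text \<open>One step of Cholesky elimination: \<open>Q'\<close> is the Schur complement of the pivot \<open>Q\<^sub>i\<^sub>i\<close>.\<close>

lemma positive_op_eliminate_row:
  fixes Q :: "complex^'n^'n"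
  assumes Q: "positive_op Q" and q_pos: "0 < Re (Q $ i $ i)"
  defines "Q' \<equiv> Q - (1 / Re (Q $ i $ i)) *\<^sub>R outer (column i Q)"
  shows "positive_op Q'" and "Q' $ i $ b = 0"
proof -
  define q where "q = Re (Q $ i $ i)"
  have herm: "cadj Q = Q" by (rule positive_op_hermitian[OF Q])
  have Q_ii: "Q $ i $ i = complex_of_real q"
    using cadj_hermitian_entry[OF herm, of i i] by (simp add: q_def complex_eq_iff)
  have Q'_eq: "Q' = Q - (1 / q) *\<^sub>R outer (column i Q)"
    by (simp add: Q'_def q_def)
  have "Q' $ i $ b = Q $ i $ b - (1 / q) *\<^sub>R (Q $ i $ i * cnj (Q $ b $ i))"
    by (simp add: Q'_eq outer_def column_def scaleR_matrix_nth)
  then show "Q' $ i $ b = 0"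
    using q_pos by (simp add: Q_ii cadj_hermitian_entry[OF herm, of b i] scaleR_conv_of_real)
  show "positive_op Q'"
    unfolding positive_op_def
  proof (intro conjI allI)
    show "cadj Q' = Q'"
      by (simp add: Q'_eq cadj_diff cadj_scaleR herm)
    fix x
    define w where "w = (Q *v x) $ i"
    define t where "t = - (complex_of_real (1 / q) * w)"
    have col_x: "(\<Sum>j\<in>UNIV. cnj (column i Q $ j) * x $ j) = w"
      by (simp add: column_def w_def matrix_vector_mult_def cadj_hermitian_entry[OF herm, of i])
    have "Re (qform Q' x) = Re (qform Q x) - (1 / q) * (cmod w)\<^sup>2"
      by (simp add: Q'_eq qform_diff qform_scaleR qform_outer col_x Re_cnj_mult_self cmod_def
          power2_eq_square)
    moreover have "Re (cnj t * (Q *v x) $ i) = - (1 / q) * (cmod w)\<^sup>2"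
      by (simp add: t_def w_def[symmetric] Re_cnj_mult_self[symmetric] mult.assoc)
    moreover have "(cmod t)\<^sup>2 * Re (Q $ i $ i) = (1 / q) * (cmod w)\<^sup>2"
      using q_pos
      by (simp add: t_def norm_mult norm_divide power_mult_distrib q_def[symmetric] power2_eq_square)
    moreover have "0 \<le> Re (qform Q (x + axis i t))"
      using Q by (simp add: positive_op_def)
    ultimately show "0 \<le> Re (qform Q' x)"
      using Re_qform_add_axis[OF herm, of x i t] by simp
  qed
qed

text \<open>Eliminating one row at a time writes a positive operator as a nonnegative sum of rank-one
  operators \<open>x x\<^sup>*\<close>; the induction runs over the set of rows that may still be nonzero.\<close>

lemma inner_nonneg_if_nonneg_on_outer:
  fixes A Q :: "complex^'n^'n"
  assumes A: "\<And>x. 0 \<le> inner A (outer x)" and Q: "positive_op Q"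
  shows "0 \<le> inner A Q"
proof -
  have "\<forall>Q. positive_op Q \<and> (\<forall>a b. a \<notin> S \<longrightarrow> Q $ a $ b = 0) \<longrightarrow> 0 \<le> inner A Q"
    if "finite S" for S :: "'n set"
    using that
  proof (induction S rule: finite_induct)
    case empty
    have "Q = 0" if "\<forall>a b. Q $ a $ b = 0" for Q :: "complex^'n^'n"
      using that by (simp add: vec_eq_iff)
    then show ?case
      by force
  next
    case (insert i S)
    show ?case
    proof (intro allI impI, elim conjE)
      fix Q :: "complex^'n^'n"
      assume Q: "positive_op Q" and rows: "\<forall>a b. a \<notin> insert i S \<longrightarrow> Q $ a $ b = 0"
      show "0 \<le> inner A Q"
      proof (cases "Re (Q $ i $ i) = 0")
        case True
        have "Q $ a $ b = 0" if "a \<notin> S" for a b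
          using rows positive_op_diag_zero_row[OF Q True, of b] that by (cases "a = i") auto
        then show ?thesis
          using insert.IH Q by blast
      next
        case False
        have q_pos: "0 < Re (Q $ i $ i)"
          using False positive_op_diag_nonneg[OF Q, of i] by linarith
        define R where "R = (1 / Re (Q $ i $ i)) *\<^sub>R outer (column i Q)"
        have elim: "positive_op (Q - R)" "(Q - R) $ i $ b = 0" for b
          unfolding R_def by (fact positive_op_eliminate_row[OF Q q_pos])+
        have "(Q - R) $ a $ b = 0" if "a \<notin> S" for a b
        proof (cases "a = i")
          case False
          then have "Q $ a $ b = 0" "Q $ a $ i = 0"
            using rows that by simp_all
          then show ?thesis
            by (simp add: R_def outer_def column_def)
        qed (use elim(2) in simp)
        then have "0 \<le> inner A (Q - R)"
          using insert.IH elim(1) by blast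
        moreover have "0 \<le> inner A R"
          using A q_pos by (simp add: R_def)
        ultimately show ?thesis
          by (simp add: inner_diff_right)
      qed
    qed
  qed
  from this[of UNIV] show ?thesis using Q by simp
qed

lemma inner_positive_op_nonneg:
  assumes "positive_op P" and "positive_op Q" shows "0 \<le> inner P Q"
proof (rule inner_nonneg_if_nonneg_on_outer[OF _ assms(2)])
  show "0 \<le> inner P (outer x)" for x
    using assms(1) Re_qform_eq_inner_outer[of P x] by (metis inner_commute positive_op_def)
qed

lemma inner_mono_loewner: "positive_op \<rho> \<Longrightarrow> M \<sqsubseteq>\<^sub>L N \<Longrightarrow> inner \<rho> M \<le> inner \<rho> N"
  using inner_positive_op_nonneg[of \<rho> "N - M"] by (simp add: loewner_le_def inner_diff_right)

lemma loewner_le_uminus_iff: "- N \<sqsubseteq>\<^sub>L - M \<longleftrightarrow> M \<sqsubseteq>\<^sub>L N"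
  by (simp add: loewner_le_def)

lemma effects_loewner_bounds: "M \<in> effects \<Longrightarrow> 0 \<sqsubseteq>\<^sub>L M \<and> M \<sqsubseteq>\<^sub>L mat 1"
  by (simp add: effects_def loewner_le_def)

lemma effects_hermitian: "M \<in> effects \<Longrightarrow> cadj M = M"
  by (simp add: effects_def positive_op_hermitian)

lemma inner_effect_bounds:
  assumes "positive_op \<rho>" and "M \<in> effects"
  shows "0 \<le> inner \<rho> M" and "inner \<rho> M \<le> inner \<rho> (mat 1)"
  using inner_mono_loewner[OF assms(1)] effects_loewner_bounds[OF assms(2)] by force+

lemma bounded_effects: "bounded (effects :: (complex^'n^'n) set)"
  unfolding bounded_iff
proof (intro exI ballI)
  fix M :: "complex^'n^'n"
  assume M: "M \<in> effects"
  then have M_pos: "positive_op M" by (simp add: effects_def)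
  have "inner M M \<le> inner M (mat 1)"
    by (rule inner_effect_bounds(2)[OF M_pos M])
  also have "\<dots> = inner (mat 1) M"
    by (rule inner_commute)
  also have "\<dots> \<le> inner (mat 1) (mat 1 :: complex^'n^'n)"
    by (rule inner_effect_bounds(2)[OF positive_op_mat_1 M])
  finally show "norm M \<le> sqrt (inner (mat 1) (mat 1 :: complex^'n^'n))"
    by (simp add: norm_eq_sqrt_inner)
qed

lemma compact_if_closed_effects: "closed \<Theta> \<Longrightarrow> \<Theta> \<subseteq> effects \<Longrightarrow> compact \<Theta>"
  using bounded_subset[OF bounded_effects] by (simp add: compact_eq_bounded_closed)

lemma closed_positive_op: "closed {A :: complex^'n^'n. positive_op A}"
proof -
  have "linear (cadj :: complex^'n^'n \<Rightarrow> _)"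
    by (rule linearI) (simp_all add: cadj_add cadj_scaleR)
  then have "continuous_on UNIV (cadj :: complex^'n^'n \<Rightarrow> _)"
    by (simp add: linear_conv_bounded_linear linear_continuous_on)
  then have "closed {A :: complex^'n^'n. cadj A = A}"
    by (rule closed_Collect_eq[OF _ continuous_on_id])
  moreover have "closed (\<Inter>x. {A :: complex^'n^'n. 0 \<le> inner (outer x) A})"
    by (intro closed_INT ballI closed_halfspace_ge[unfolded atLeast_def])
  moreover have "{A :: complex^'n^'n. positive_op A}
      = {A. cadj A = A} \<inter> (\<Inter>x. {A. 0 \<le> inner (outer x) A})"
    by (auto simp: positive_op_def Re_qform_eq_inner_outer)
  ultimately show ?thesis by auto
qed

lemma convex_positive_op: "convex {A :: complex^'n^'n. positive_op A}"
  unfolding convex_def by (auto intro!: positive_op_add positive_op_scaleR)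

lemma trace_scaleR: "trace (c *\<^sub>R A) = c *\<^sub>R trace (A :: complex^'n^'n)"
  by (simp add: trace_def scaleR_sum_right)

lemma inner_pdo_eq_Re_trace: "\<rho> \<in> pdo \<Longrightarrow> Re (trace (M ** \<rho>)) = inner \<rho> M"
  by (simp add: pdo_def positive_op_def Re_trace_mult_eq_inner)

text \<open>If \<open>S\<close> is closed under adding positive operators, the normal of a hyperplane separating \<open>S\<close> from
  a point is nonnegative on positive operators; its Hermitian part is then a positive operator, and
  after scaling a partial density operator.\<close>

lemma pdo_separates_upward_closed:
  fixes S :: "(complex^'n^'n) set"
  assumes "convex S" and "closed S" and "S \<noteq> {}" and "z \<notin> S"
    and S_hermitian: "\<forall>Y\<in>S. cadj Y = Y" and z_hermitian: "cadj z = z"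
    and upward: "\<forall>Y\<in>S. \<forall>P. positive_op P \<longrightarrow> Y + P \<in> S"
  shows "\<exists>\<rho>\<in>pdo. \<exists>\<beta>. inner \<rho> z < \<beta> \<and> (\<forall>Y\<in>S. \<beta> < inner \<rho> Y)"
proof -
  obtain a b where a_z: "inner a z < b" and a_S: "\<forall>Y\<in>S. b < inner a Y"
    using separating_hyperplane_closed_point[OF assms(1,2,4)] by blast
  obtain Y0 where Y0: "Y0 \<in> S" using \<open>S \<noteq> {}\<close> by blast
  have a_nonneg: "0 \<le> inner a P" if P: "positive_op P" for P
  proof (rule ccontr)
    assume neg: "\<not> 0 \<le> inner a P"
    define t where "t = (inner a Y0 - b + 1) / (- inner a P)"
    have "0 < t"
      using a_S Y0 neg unfolding t_def by (intro divide_pos_pos) auto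
    then have "Y0 + t *\<^sub>R P \<in> S"
      using upward Y0 positive_op_scaleR[OF P] by simp
    then have "b < inner a (Y0 + t *\<^sub>R P)"
      using a_S by blast
    then have "b < inner a Y0 + t * inner a P"
      by (simp add: inner_add_right)
    moreover have "t * inner a P = - (inner a Y0 - b + 1)"
      using neg by (simp add: t_def)
    ultimately show False by simp
  qed
  define r where "r = (1/2) *\<^sub>R (a + cadj a)"
  have r_eq: "inner r Y = inner a Y" if "cadj Y = Y" for Y
    using inner_cadj_cadj[of a Y] that by (simp add: r_def inner_add_left)
  have r_pos: "positive_op r"
    unfolding positive_op_def
  proof (intro conjI allI)
    show "cadj r = r"
      by (simp add: r_def cadj_scaleR cadj_add add.commute)
    show "0 \<le> Re (qform r x)" for x
      using a_nonneg[OF positive_op_outer] r_eq[OF cadj_outer]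
      by (simp add: Re_qform_eq_inner_outer inner_commute)
  qed
  define c where "c = 1 / (1 + \<bar>Re (trace r)\<bar>)"
  have c_pos: "0 < c" by (simp add: c_def add_pos_nonneg)
  define \<rho> where "\<rho> = c *\<^sub>R r"
  have "c * Re (trace r) \<le> 1"
    by (simp add: c_def divide_le_eq add_pos_nonneg)
  then have "\<rho> \<in> pdo"
    using positive_op_scaleR[OF r_pos, of c] c_pos by (simp add: pdo_def \<rho>_def trace_scaleR)
  moreover have "inner \<rho> Y = c * inner a Y" if "cadj Y = Y" for Y
    using r_eq[OF that] by (simp add: \<rho>_def)
  ultimately show ?thesis
    using a_z a_S c_pos S_hermitian z_hermitian by (intro bexI[of _ \<rho>] exI[of _ "c * b"]) auto
qed

lemma pdo_separates_not_above:
  fixes K :: "(complex^'n^'n) set"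
  assumes "compact K" and "convex K" and "K \<noteq> {}" and K_hermitian: "\<forall>M\<in>K. cadj M = M"
    and "cadj N = N" and not_above: "\<not> (\<exists>M\<in>K. M \<sqsubseteq>\<^sub>L N)"
  shows "\<exists>\<rho>\<in>pdo. \<exists>\<beta>. inner \<rho> N < \<beta> \<and> (\<forall>M\<in>K. \<beta> < inner \<rho> M)"
proof -
  define S where "S = (\<Union>P\<in>{P. positive_op P}. \<Union>M\<in>K. {P + M})"
  have S_iff: "Y \<in> S \<longleftrightarrow> (\<exists>P M. positive_op P \<and> M \<in> K \<and> Y = P + M)" for Y
    by (auto simp: S_def)
  have "K \<subseteq> S"
  proof
    fix M
    assume "M \<in> K"
    moreover have "positive_op (0 :: complex^'n^'n)"
      using positive_op_scaleR[OF positive_op_mat_1, of 0] by simp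
    ultimately show "M \<in> S"
      unfolding S_iff by (intro exI[of _ 0] exI[of _ M]) simp
  qed
  moreover have "\<exists>\<rho>\<in>pdo. \<exists>\<beta>. inner \<rho> N < \<beta> \<and> (\<forall>Y\<in>S. \<beta> < inner \<rho> Y)"
  proof (rule pdo_separates_upward_closed)
    show "closed S"
      unfolding S_def by (rule closed_compact_sums[OF closed_positive_op \<open>compact K\<close>])
    show "convex S"
      unfolding S_def by (rule convex_sums[OF convex_positive_op \<open>convex K\<close>])
    show "S \<noteq> {}"
      using \<open>K \<noteq> {}\<close> \<open>K \<subseteq> S\<close> by blast
    show "N \<notin> S"
      using not_above by (auto simp: S_iff loewner_le_def)
    show "\<forall>Y\<in>S. cadj Y = Y"
      using K_hermitian by (auto simp: S_iff cadj_add positive_op_hermitian)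
    show "\<forall>Y\<in>S. \<forall>P. positive_op P \<longrightarrow> Y + P \<in> S"
      by (auto simp: S_iff) (metis add.commute add.left_commute positive_op_add)
  qed fact
  ultimately show ?thesis by blast
qed

lemma exp_dem_pdo:
  "\<rho> \<in> pdo \<Longrightarrow> exp_dem \<rho> \<Theta> = (if \<Theta> = {} then inner \<rho> (mat 1) else (INF M\<in>\<Theta>. inner \<rho> M))"
  using inner_pdo_eq_Re_trace[of \<rho> "mat 1"] by (simp add: exp_dem_def inner_pdo_eq_Re_trace)

lemma exp_ang_pdo:
  "\<rho> \<in> pdo \<Longrightarrow> exp_ang \<rho> \<Theta> = (if \<Theta> = {} then 0 else (SUP M\<in>\<Theta>. inner \<rho> M))"
  by (simp add: exp_ang_def inner_pdo_eq_Re_trace)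

lemma bdd_below_inner_effects: "positive_op \<rho> \<Longrightarrow> X \<subseteq> effects \<Longrightarrow> bdd_below ((\<lambda>M. inner \<rho> M) ` X)"
  using inner_effect_bounds(1) by (auto simp: bdd_below_def)

lemma bdd_above_inner_effects: "positive_op \<rho> \<Longrightarrow> X \<subseteq> effects \<Longrightarrow> bdd_above ((\<lambda>M. inner \<rho> M) ` X)"
  using inner_effect_bounds(2) by (auto simp: bdd_above_def)

lemma le_S_imp_preceq_dem:
  fixes \<Theta> \<Psi> :: "(complex^'n^'n) set"
  assumes "\<Theta> \<subseteq> effects" and "\<Theta> \<noteq> {}" and "le_S \<Theta> \<Psi>"
  shows "preceq_dem \<Theta> \<Psi>"
  unfolding preceq_dem_def
proof
  fix \<rho> :: "complex^'n^'n"
  assume \<rho>: "\<rho> \<in> pdo"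
  then have pos: "positive_op \<rho>" by (simp add: pdo_def)
  have below: "(INF M\<in>\<Theta>. inner \<rho> M) \<le> inner \<rho> N" if "\<exists>M\<in>\<Theta>. M \<sqsubseteq>\<^sub>L N" for N
    using that cINF_lower[OF bdd_below_inner_effects[OF pos assms(1)]] inner_mono_loewner[OF pos]
    by (meson order_trans)
  have "(INF M\<in>\<Theta>. inner \<rho> M) \<le> exp_dem \<rho> \<Psi>"
  proof (cases "\<Psi> = {}")
    case True
    then show ?thesis
      using below[of "mat 1"] assms(1,2) effects_loewner_bounds \<rho> by (force simp: exp_dem_pdo)
  next
    case False
    then show ?thesis
      using below assms(3) \<rho> by (auto simp: exp_dem_pdo le_S_def intro!: cINF_greatest)
  qed
  then show "exp_dem \<rho> \<Theta> \<le> exp_dem \<rho> \<Psi>"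
    using \<rho> assms(2) by (simp add: exp_dem_pdo)
qed


lemma le_H_imp_preceq_ang:
  fixes \<Theta> \<Psi> :: "(complex^'n^'n) set"
  assumes "\<Psi> \<subseteq> effects" and "\<Psi> \<noteq> {}" and "le_H \<Theta> \<Psi>"
  shows "preceq_ang \<Theta> \<Psi>"
  unfolding preceq_ang_def
proof
  fix \<rho> :: "complex^'n^'n"
  assume \<rho>: "\<rho> \<in> pdo"
  then have pos: "positive_op \<rho>" by (simp add: pdo_def)
  have above: "inner \<rho> M \<le> (SUP N\<in>\<Psi>. inner \<rho> N)" if "\<exists>N\<in>\<Psi>. M \<sqsubseteq>\<^sub>L N" for M
    using that cSUP_upper[OF _ bdd_above_inner_effects[OF pos assms(1)]] inner_mono_loewner[OF pos]
    by (meson order_trans)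
  have "exp_ang \<rho> \<Theta> \<le> (SUP N\<in>\<Psi>. inner \<rho> N)"
  proof (cases "\<Theta> = {}")
    case True
    then show ?thesis
      using above[of 0] assms(1,2) effects_loewner_bounds \<rho> by (force simp: exp_ang_pdo)
  next
    case False
    then show ?thesis
      using above assms(3) \<rho> by (auto simp: exp_ang_pdo le_H_def intro!: cSUP_least)
  qed
  then show "exp_ang \<rho> \<Theta> \<le> exp_ang \<rho> \<Psi>"
    using \<rho> assms(2) by (simp add: exp_ang_pdo)
qed


lemma preceq_dem_imp_le_S:
  fixes \<Theta> \<Psi> :: "(complex^'n^'n) set"
  assumes "\<Theta> \<subseteq> effects" and "\<Psi> \<subseteq> effects" and "compact \<Theta>" and "convex \<Theta>" and "\<Theta> \<noteq> {}"
    and "preceq_dem \<Theta> \<Psi>"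
  shows "le_S \<Theta> \<Psi>"
  unfolding le_S_def
proof (rule ballI, rule ccontr)
  fix N
  assume N: "N \<in> \<Psi>" and not_above: "\<not> (\<exists>M\<in>\<Theta>. M \<sqsubseteq>\<^sub>L N)"
  have "\<forall>M\<in>\<Theta>. cadj M = M" and "cadj N = N"
    using assms(1,2) N effects_hermitian by blast+
  then obtain \<rho> \<beta> where \<rho>: "\<rho> \<in> pdo" and N_below: "inner \<rho> N < \<beta>"
    and \<Theta>_above: "\<forall>M\<in>\<Theta>. \<beta> < inner \<rho> M"
    using pdo_separates_not_above[OF assms(3-5) _ _ not_above] by blast
  then have pos: "positive_op \<rho>" by (simp add: pdo_def)
  have "\<beta> \<le> (INF M\<in>\<Theta>. inner \<rho> M)"
    using \<Theta>_above by (intro cINF_greatest[OF assms(5)]) (simp add: less_imp_le)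
  also have "\<dots> = exp_dem \<rho> \<Theta>"
    using \<rho> assms(5) by (simp add: exp_dem_pdo)
  also have "\<dots> \<le> exp_dem \<rho> \<Psi>"
    using assms(6) \<rho> by (simp add: preceq_dem_def)
  also have "\<dots> = (INF M\<in>\<Psi>. inner \<rho> M)"
    using \<rho> N by (auto simp: exp_dem_pdo)
  also have "\<dots> \<le> inner \<rho> N"
    by (rule cINF_lower[OF bdd_below_inner_effects[OF pos assms(2)] N])
  finally show False
    using N_below by simp
qed


lemma preceq_ang_imp_le_H:
  fixes \<Theta> \<Psi> :: "(complex^'n^'n) set"
  assumes "\<Theta> \<subseteq> effects" and "\<Psi> \<subseteq> effects" and "compact \<Psi>" and "convex \<Psi>" and "\<Psi> \<noteq> {}"
    and "preceq_ang \<Theta> \<Psi>"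
  shows "le_H \<Theta> \<Psi>"
  unfolding le_H_def
proof (rule ballI, rule ccontr)
  fix M
  assume M: "M \<in> \<Theta>" and not_below: "\<not> (\<exists>N\<in>\<Psi>. M \<sqsubseteq>\<^sub>L N)"
  have "\<not> (\<exists>N\<in>uminus ` \<Psi>. N \<sqsubseteq>\<^sub>L - M)"
    using not_below by (auto simp: loewner_le_uminus_iff)
  moreover have "\<forall>N\<in>uminus ` \<Psi>. cadj N = N" and "cadj (- M) = - M"
    using assms(1,2) M effects_hermitian by (auto simp: cadj_minus)
  moreover have "uminus ` \<Psi> \<noteq> {}"
    using assms(5) by blast
  ultimately obtain \<rho> \<beta> where \<rho>: "\<rho> \<in> pdo" and M_above: "inner \<rho> (- M) < \<beta>"
    and \<Psi>_below: "\<forall>N\<in>\<Psi>. \<beta> < inner \<rho> (- N)"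
    using pdo_separates_not_above[OF compact_negations[OF assms(3)] convex_negations[OF assms(4)]]
    by (metis image_eqI)
  then have pos: "positive_op \<rho>" by (simp add: pdo_def)
  have "inner \<rho> M \<le> (SUP N\<in>\<Theta>. inner \<rho> N)"
    by (rule cSUP_upper[OF M bdd_above_inner_effects[OF pos assms(1)]])
  also have "\<dots> = exp_ang \<rho> \<Theta>"
    using \<rho> M by (auto simp: exp_ang_pdo)
  also have "\<dots> \<le> exp_ang \<rho> \<Psi>"
    using assms(6) \<rho> by (simp add: preceq_ang_def)
  also have "\<dots> = (SUP N\<in>\<Psi>. inner \<rho> N)"
    using \<rho> assms(5) by (simp add: exp_ang_pdo)
  also have "\<dots> \<le> - \<beta>"
  proof (rule cSUP_least[OF assms(5)])
    show "inner \<rho> N \<le> - \<beta>" if "N \<in> \<Psi>" for N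
      using \<Psi>_below that by fastforce
  qed
  finally show False
    using M_above by simp
qed


theorem theorem3p5:
  fixes V :: "'v set" and \<Theta> \<Psi> :: "(complex^'n^'n) set"
  assumes "finite V" and "CARD('n) = 2 ^ card V"
    and "\<Theta> \<subseteq> effects" and "\<Psi> \<subseteq> effects"
    and "convex \<Theta>" and "closed \<Theta>" and "convex \<Psi>" and "closed \<Psi>"
  shows "(\<Theta> \<noteq> {} \<longrightarrow> (preceq_dem \<Theta> \<Psi> \<longleftrightarrow> le_S \<Theta> \<Psi>))
       \<and> (\<Psi> \<noteq> {} \<longrightarrow> (preceq_ang \<Theta> \<Psi> \<longleftrightarrow> le_H \<Theta> \<Psi>))"
proof -
  have "compact \<Theta>" and "compact \<Psi>"
    using assms(3,4,6,8) by (simp_all add: compact_if_closed_effects)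
  have "preceq_dem \<Theta> \<Psi> \<longleftrightarrow> le_S \<Theta> \<Psi>" if "\<Theta> \<noteq> {}"
    using that assms(3-5) \<open>compact \<Theta>\<close>
    by (blast intro: le_S_imp_preceq_dem preceq_dem_imp_le_S)
  moreover have "preceq_ang \<Theta> \<Psi> \<longleftrightarrow> le_H \<Theta> \<Psi>" if "\<Psi> \<noteq> {}"
    using that assms(3,4,7) \<open>compact \<Psi>\<close>
    by (blast intro: le_H_imp_preceq_ang preceq_ang_imp_le_H)
  ultimately show ?thesis
    by blast
qed

end
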